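(* Let $k\ge0$ and let $\eta$ be a Borel probability measure on $I^{\mathbb Z}$ invariant under $\mathbb S^{2^k}$. Then $D_k[\eta]$ is ergodic with respect to $\mathbb S\times\mathbb O$ if and only if $\eta$ is ergodic with respect to $\mathbb S^{2^{k+1}}$.
   Context: $I=\{0,1\}$. $\mathbb S$ is the left shift on $I^{\mathbb Z}$; $\mathbb S^j\eta$ denotes the pushforward of $\eta$. $I^{\mathbb N}$ is the space of $0$–$1$ sequences $(\alpha_i)_{i\ge1}$ with uniform Bernoulli measure $m$; $\mathbb O$ is the odometer (if $\alpha_1=\dots=\alpha_{n-1}=1$, $\alpha_n=0$, then $\mathbb O[\alpha]_i=0$ for $i<n$, $\mathbb O[\alpha]_n=1$, $\mathbb O[\alpha]_i=\alpha_i$ for $i>n$). For $0\le r\le2^k-1$, $A_{r,k}=\{\alpha:\sum_{i=1}^k\alpha_i2^{i-1}=r\}$. For an $\mathbb S^{2^k}$-invariant $\eta$, the measure of periodic type with base $\eta$ is $D_k[\eta]=\sum_{i=0}^{2^k-1}\mathbb S^i\eta\times(\chi_{A_{i,k}}m)$, a Borel probability measure on $I^{\mathbb Z}\times I^{\mathbb N}$ invariant under $\mathbb S\times\mathbb O$. *)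

theory Defs
  imports "HOL-Probability.Probability"
begin

text \<open>The space I^Z of two-sided 0-1 sequences (True = 1), with the product
  sigma-algebra (= Borel sigma-algebra of the product topology).\<close>
definition seqZ :: "(int \<Rightarrow> bool) measure" where
  "seqZ = PiM UNIV (\<lambda>_::int. count_space (UNIV :: bool set))"

definition shiftZ :: "(int \<Rightarrow> bool) \<Rightarrow> (int \<Rightarrow> bool)" where
  "shiftZ x = (\<lambda>i. x (i + 1))"

text \<open>The space I^N of one-sided sequences, with uniform Bernoulli measure m.
  Coordinate alpha_i (i \<ge> 1) of the paper is stored at index i - 1.\<close>
definition bernoulliN :: "(nat \<Rightarrow> bool) measure" where
  "bernoulliN = PiM UNIV (\<lambda>_::nat. measure_pmf (bernoulli_pmf (1/2)))"

text \<open>The odometer (adding 1 with carry to the right). On the null sequence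
  of all ones it is defined to give the all-zero sequence.\<close>
definition odometer :: "(nat \<Rightarrow> bool) \<Rightarrow> (nat \<Rightarrow> bool)" where
  "odometer a = (if (\<forall>i. a i) then (\<lambda>_. False)
     else (let n = (LEAST n. \<not> a n) in
           (\<lambda>i. if i < n then False else if i = n then True else a i)))"

definition cylA :: "nat \<Rightarrow> nat \<Rightarrow> (nat \<Rightarrow> bool) set" where
  "cylA r k = {a. (\<Sum>i<k. (if a i then 2 ^ i else 0)) = r}"

definition shift_push :: "nat \<Rightarrow> (int \<Rightarrow> bool) measure \<Rightarrow> (int \<Rightarrow> bool) measure" where
  "shift_push j \<eta> = distr \<eta> seqZ (shiftZ ^^ j)"

definition periodic_type :: "nat \<Rightarrow> (int \<Rightarrow> bool) measure \<Rightarrow> ((int \<Rightarrow> bool) \<times> (nat \<Rightarrow> bool)) measure" where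
  "periodic_type k \<eta> =
     measure_of (space (seqZ \<Otimes>\<^sub>M bernoulliN)) (sets (seqZ \<Otimes>\<^sub>M bernoulliN))
       (\<lambda>B. \<Sum>i<2^k. emeasure (shift_push i \<eta> \<Otimes>\<^sub>M density bernoulliN (indicator (cylA i k))) B)"

definition ergodic :: "'a measure \<Rightarrow> ('a \<Rightarrow> 'a) \<Rightarrow> bool" where
  "ergodic M T \<longleftrightarrow> T \<in> M \<rightarrow>\<^sub>M M \<and> distr M M T = M \<and>
     (\<forall>A \<in> sets M. T -` A \<inter> space M = A \<longrightarrow> emeasure M A = 0 \<or> emeasure M A = 1)"

end

theory Submission
  imports Defs
begin

text \<open>
  Write R = S^(2^k). If A is invariant under R^2, the set of pairs (x, alpha) with
  S^(-n) x in A, where n < 2^(k+1) is the number with binary digits alpha_1, ..., alpha_(k+1),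
  is invariant under S x O and has D_k[eta]-measure eta(A); so ergodicity of D_k[eta] forces
  eta(A) to be 0 or 1.

  Conversely, let E be invariant under S x O. For j >= k, the mass of the section E_x inside
  the cylinder A_{r,j} is a function of x invariant under S^(2^j) = R^(2^(j-k)), and all these
  powers of R are ergodic because R^2 is: if T^2 is ergodic then so is T^4, since a nontrivial
  T^4-invariant set would yield a T^2-invariant set of measure 1/2. Hence these masses are
  a.e. constant, and the R-invariance of eta makes the constants agree for all r divisible
  by 2^k. At a generic point x the set E_x \<inter> A_{0,k} is therefore equidistributed over all
  finer cylinders, which by uniqueness of measures forces its measure to be 0 or 2^(-k);
  and D_k[eta](E) is 2^k times this measure.
\<close>

section \<open>Binary prefixes and the odometer\<close>

definition binval :: "nat \<Rightarrow> (nat \<Rightarrow> bool) \<Rightarrow> nat" where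
  "binval j a = (\<Sum>i<j. if a i then 2 ^ i else 0)"

lemma binval_0 [simp]: "binval 0 a = 0"
  by (simp add: binval_def)

lemma binval_Suc: "binval (Suc j) a = binval j a + (if a j then 2 ^ j else 0)"
  by (simp add: binval_def)

lemma binval_eq_horner_sum: "binval j a = horner_sum of_bool 2 (map a [0..<j])"
  unfolding binval_def horner_sum_eq_sum by (intro sum.cong) auto

lemma bit_binval_iff: "bit (binval j a) i \<longleftrightarrow> i < j \<and> a i"
  by (auto simp: binval_eq_horner_sum bit_horner_sum_bit_iff)

lemma binval_less: "binval j a < 2 ^ j"
  by (induction j) (auto simp: binval_Suc)

lemma binval_eq_iff: "binval j a = r \<longleftrightarrow> r < 2 ^ j \<and> (\<forall>i<j. a i = bit r i)"
proof -
  have "r < 2 ^ j \<longleftrightarrow> (\<forall>i. bit r i \<longrightarrow> i < j)"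
    by (auto simp: take_bit_nat_eq_self_iff[symmetric] bit_eq_iff bit_take_bit_iff)
  then show ?thesis
    using binval_less[of j a] by (auto simp: bit_eq_iff bit_binval_iff)
qed

lemma binval_mod: "k \<le> j \<Longrightarrow> binval j a mod 2 ^ k = binval k a"
  by (auto simp: bit_eq_iff bit_binval_iff simp flip: take_bit_eq_mod simp: bit_take_bit_iff)

lemma binval_all_True: "(\<And>i. i < j \<Longrightarrow> a i) \<Longrightarrow> binval j a = 2 ^ j - 1"
  by (induction j) (auto simp: binval_Suc)

lemma binval_all_False: "(\<And>i. i < j \<Longrightarrow> \<not> a i) \<Longrightarrow> binval j a = 0"
  by (induction j) (auto simp: binval_Suc)

lemma binval_odometer: "binval j (odometer a) = (binval j a + 1) mod 2 ^ j"
proof (cases "\<forall>i. a i")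
  case True
  then show ?thesis by (simp add: odometer_def binval_all_True binval_all_False)
next
  case False
  define n where "n = (LEAST n. \<not> a n)"
  have "\<not> a n" and below_n: "\<And>i. i < n \<Longrightarrow> a i"
    using False LeastI_ex[of "\<lambda>n. \<not> a n"] not_less_Least[of _ "\<lambda>n. \<not> a n"] unfolding n_def by blast+
  have odo: "odometer a = (\<lambda>i. if i < n then False else if i = n then True else a i)"
    unfolding odometer_def n_def Let_def using False by (simp only: if_False)
  show ?thesis
  proof (cases "j \<le> n")
    case True
    then show ?thesis by (simp add: odo below_n binval_all_True binval_all_False)
  next
    case False
    have "binval (Suc n + d) (odometer a) = binval (Suc n + d) a + 1" for d
      by (induction d) (simp_all add: binval_Suc odo below_n binval_all_True binval_all_False \<open>\<not> a n\<close>)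
    then have "binval j (odometer a) = binval j a + 1"
      using False by (metis Suc_leI le_add_diff_inverse not_le)
    then show ?thesis using binval_less[of j "odometer a"] by simp
  qed
qed

lemma binval_odometer_funpow: "binval j ((odometer ^^ n) a) = (binval j a + n) mod 2 ^ j"
  by (induction n) (simp_all add: binval_odometer mod_Suc_eq binval_less)

lemma add_mod_cancel_less:
  fixes x y N :: nat
  assumes "x < N" "y < N" "(x + n) mod N = (y + n) mod N"
  shows "x = y"
proof -
  have "x = y" if "y \<le> x" "x < N" "(x + n) mod N = (y + n) mod N" for x y
  proof -
    have "N dvd x - y"
      using mod_eq_dvd_iff_nat[of "y + n" "x + n" N] that by simp
    then show ?thesis
      using nat_dvd_not_less[of "x - y" N] that by linarith
  qed
  from this[of x y] this[of y x] assms show ?thesis by linarith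
qed

lemma bij_betw_add_mod:
  assumes "0 < (N :: nat)"
  shows "bij_betw (\<lambda>x. (x + n) mod N) {..<N} {..<N}"
proof -
  have "inj_on (\<lambda>x. (x + n) mod N) {..<N}"
    by (auto intro: inj_onI add_mod_cancel_less)
  then show ?thesis
    using assms by (intro bij_betw_imageI endo_inj_surj) auto
qed

section \<open>Cylinder sets\<close>

lemma cylA_binval: "cylA r j = {a. binval j a = r}"
  by (simp add: cylA_def binval_def)

lemma space_bernoulliN [simp]: "space bernoulliN = UNIV"
  by (simp add: bernoulliN_def space_PiM PiE_UNIV_domain)

lemma prob_space_bernoulliN: "prob_space bernoulliN"
  unfolding bernoulliN_def by (intro prob_space_PiM) (simp add: prob_space_measure_pmf)

lemma cylA_eq_empty: "\<not> r < 2 ^ j \<Longrightarrow> cylA r j = {}"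
  using binval_less[of j] unfolding cylA_binval by (metis (mono_tags) empty_Collect_eq)

lemma cylA_eq_prod_emb:
  assumes "r < 2 ^ j"
  shows "cylA r j = prod_emb UNIV (\<lambda>_. measure_pmf (bernoulli_pmf (1/2))) {..<j} (\<Pi>\<^sub>E i\<in>{..<j}. {bit r i})"
proof -
  have "prod_emb UNIV (\<lambda>_. measure_pmf (bernoulli_pmf (1/2))) {..<j} (\<Pi>\<^sub>E i\<in>{..<j}. {bit r i})
      = (\<Pi>\<^sub>E i\<in>UNIV. if i \<in> {..<j} then {bit r i} else space (measure_pmf (bernoulli_pmf (1/2))))"
    by (rule prod_emb_PiE) auto
  then show ?thesis
    using assms by (auto simp: cylA_binval binval_eq_iff PiE_UNIV_domain Pi_iff split: if_splits)
qed

lemma sets_cylA [measurable]: "cylA r j \<in> sets bernoulliN"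
proof (cases "r < 2 ^ j")
  case True
  then show ?thesis
    unfolding cylA_eq_prod_emb[OF True] bernoulliN_def by (intro sets_PiM_I) auto
next
  case False
  then show ?thesis using cylA_eq_empty[OF False] by simp
qed

lemma emeasure_cylA: "emeasure bernoulliN (cylA r j) = (if r < 2 ^ j then ennreal ((1/2) ^ j) else 0)"
proof (cases "r < 2 ^ j")
  case True
  have "emeasure bernoulliN (cylA r j) = (\<Prod>i<j. emeasure (measure_pmf (bernoulli_pmf (1/2))) {bit r i})"
    unfolding cylA_eq_prod_emb[OF True] bernoulliN_def
    by (rule emeasure_PiM_emb) (auto simp: prob_space_measure_pmf)
  also have "\<dots> = (\<Prod>i<j. ennreal (1/2))"
    by (intro prod.cong refl) (simp add: emeasure_pmf_single)
  also have "\<dots> = ennreal ((1/2) ^ j)"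
    by (subst ennreal_power[symmetric]) auto
  finally show ?thesis using True by simp
next
  case False
  then show ?thesis using cylA_eq_empty[OF False] by simp
qed

lemma binval_pred_eq_UN_cylA: "{a. P (binval j a)} = (\<Union>s\<in>{s. s < 2 ^ j \<and> P s}. cylA s j)"
  using binval_less by (auto simp: cylA_binval)

lemma sets_binval_pred: "{a. P (binval j a)} \<in> sets bernoulliN"
  unfolding binval_pred_eq_UN_cylA by (intro sets.finite_UN) auto

definition fine_cylinders :: "nat \<Rightarrow> (nat \<Rightarrow> bool) set set" where
  "fine_cylinders k = {cylA r j | r j. k \<le> j}"

lemma cylA_in_fine_cylinders: "k \<le> j \<Longrightarrow> cylA r j \<in> fine_cylinders k"
  unfolding fine_cylinders_def by blast

lemma cylA_Int_cylA:
  assumes "j \<le> j'"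
  shows "cylA r j \<inter> cylA r' j' = (if r' mod 2 ^ j = r then cylA r' j' else {})"
  using binval_mod[OF assms] by (auto simp: cylA_binval)

lemma Int_stable_fine_cylinders: "Int_stable (fine_cylinders k)"
proof (rule Int_stableI)
  have empty: "{} \<in> fine_cylinders k"
    using cylA_in_fine_cylinders[of k k "2 ^ k"] cylA_eq_empty[of "2 ^ k" k] by simp
  fix X Y assume "X \<in> fine_cylinders k" "Y \<in> fine_cylinders k"
  then obtain r j r' j' where X: "X = cylA r j" "k \<le> j" and Y: "Y = cylA r' j'" "k \<le> j'"
    by (auto simp: fine_cylinders_def)
  show "X \<inter> Y \<in> fine_cylinders k"
  proof (cases "j \<le> j'")
    case True
    then show ?thesis
      using cylA_Int_cylA[OF True, of r r'] empty cylA_in_fine_cylinders[OF \<open>k \<le> j'\<close>] X Y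
      by (simp split: if_split)
  next
    case False
    then have "j' \<le> j" by simp
    then show ?thesis
      using cylA_Int_cylA[OF \<open>j' \<le> j\<close>, of r' r] empty cylA_in_fine_cylinders[OF \<open>k \<le> j\<close>] X Y
      by (simp add: Int_commute split: if_split)
  qed
qed

lemma sets_bernoulliN_eq_fine_cylinders: "sets bernoulliN = sigma_sets UNIV (fine_cylinders k)"
proof -
  have coords: "sets bernoulliN = sigma_sets UNIV {{a. a i \<in> B} | (i :: nat) B. B \<in> (UNIV :: bool set set)}"
    unfolding bernoulliN_def sets_PiM_single by (simp add: PiE_UNIV_domain)
  show ?thesis unfolding coords
  proof (rule sigma_sets_eqI)
    fix X assume "X \<in> {{a. a i \<in> B} | (i :: nat) B. B \<in> (UNIV :: bool set set)}"
    then obtain i B where X: "X = {a. a i \<in> B}" by auto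
    define j where "j = max k (Suc i)"
    have "i < j" by (simp add: j_def)
    then have "X = {a. bit (binval j a) i \<in> B}"
      unfolding X by (simp add: bit_binval_iff)
    also have "\<dots> = (\<Union>s\<in>{s. s < 2 ^ j \<and> bit s i \<in> B}. cylA s j)"
      by (rule binval_pred_eq_UN_cylA)
    also have "\<dots> \<in> sigma_sets UNIV (fine_cylinders k)"
    proof -
      interpret sigma_algebra UNIV "sigma_sets UNIV (fine_cylinders k)"
        by (rule sigma_algebra_sigma_sets) simp
      have "cylA s j \<in> sigma_sets UNIV (fine_cylinders k)" for s
        by (rule sigma_sets.Basic) (simp add: cylA_in_fine_cylinders j_def)
      then show ?thesis by (intro finite_UN) auto
    qed
    finally show "X \<in> sigma_sets UNIV (fine_cylinders k)" .
  next
    fix X assume "X \<in> fine_cylinders k"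
    then have "X \<in> sets bernoulliN"
      by (auto simp: fine_cylinders_def)
    then show "X \<in> sigma_sets UNIV {{a. a i \<in> B} | (i :: nat) B. B \<in> (UNIV :: bool set set)}"
      by (simp only: coords)
  qed
qed

lemma UN_cylA: "(\<Union>r. cylA r k) = UNIV"
  by (auto simp: cylA_binval)

lemma measure_eqI_fine_cylinders:
  assumes "finite_measure M" "sets M = sets bernoulliN" "sets N = sets bernoulliN"
    and "\<And>C. C \<in> fine_cylinders k \<Longrightarrow> emeasure M C = emeasure N C"
  shows "M = N"
proof (rule measure_eqI_generator_eq_countable[OF Int_stable_fine_cylinders _ assms(4)])
  show "sets M = sigma_sets UNIV (fine_cylinders k)" "sets N = sigma_sets UNIV (fine_cylinders k)"
    using assms(2,3) sets_bernoulliN_eq_fine_cylinders by simp_all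
  show "range (\<lambda>r. cylA r k) \<subseteq> fine_cylinders k"
    using cylA_in_fine_cylinders by blast
  show "\<Union> (range (\<lambda>r. cylA r k)) = UNIV" "countable (range (\<lambda>r. cylA r k))"
    using UN_cylA by simp_all
  show "emeasure M C \<noteq> \<infinity>" for C
    using assms(1) by (simp add: finite_measure.emeasure_finite)
qed simp

lemma vimage_odometer_funpow_cylA:
  "r < 2 ^ j \<Longrightarrow> (odometer ^^ n) -` cylA ((r + n) mod 2 ^ j) j = cylA r j"
  using add_mod_cancel_less[OF binval_less] by (auto simp: cylA_binval binval_odometer_funpow)

lemma measurable_odometer_funpow [measurable]: "odometer ^^ n \<in> bernoulliN \<rightarrow>\<^sub>M bernoulliN"
proof (rule measurable_sigma_sets[OF sets_bernoulliN_eq_fine_cylinders[of 0]])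
  fix C assume "C \<in> fine_cylinders 0"
  then obtain r j where "C = cylA r j"
    by (auto simp: fine_cylinders_def)
  then have "(odometer ^^ n) -` C = {a. (binval j a + n) mod 2 ^ j = r}"
    by (auto simp: cylA_binval binval_odometer_funpow)
  then show "(odometer ^^ n) -` C \<inter> space bernoulliN \<in> sets bernoulliN"
    using sets_binval_pred[of "\<lambda>v. (v + n) mod 2 ^ j = r" j] by simp
qed (auto simp: fine_cylinders_def)

lemma measurable_odometer [measurable]: "odometer \<in> bernoulliN \<rightarrow>\<^sub>M bernoulliN"
  using measurable_odometer_funpow[of 1] by simp

lemma distr_odometer_funpow: "distr bernoulliN bernoulliN (odometer ^^ n) = bernoulliN"
proof (rule measure_eqI_fine_cylinders[where k=0])
  show "finite_measure (distr bernoulliN bernoulliN (odometer ^^ n))"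
    using prob_space_bernoulliN by (intro prob_space.finite_measure prob_space.prob_space_distr) simp_all
  fix C assume "C \<in> fine_cylinders 0"
  then obtain r j where C: "C = cylA r j"
    by (auto simp: fine_cylinders_def)
  show "emeasure (distr bernoulliN bernoulliN (odometer ^^ n)) C = emeasure bernoulliN C"
  proof (cases "r < 2 ^ j")
    case True
    then obtain r' where r': "r' < 2 ^ j" "r = (r' + n) mod 2 ^ j"
      using bij_betw_imp_surj_on[OF bij_betw_add_mod[of "2 ^ j" n]] by (auto simp: image_iff)
    then show ?thesis
      by (simp add: C emeasure_distr vimage_odometer_funpow_cylA emeasure_cylA)
  next
    case False
    then show ?thesis by (simp add: C emeasure_distr cylA_eq_empty)
  qed
qed simp_all

lemma measure_cylA: "measure bernoulliN (cylA r j) = (if r < 2 ^ j then (1/2) ^ j else 0)"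
  by (simp add: measure_def emeasure_cylA)

lemma cylA_unique: "a \<in> cylA r j \<Longrightarrow> a \<in> cylA r' j \<Longrightarrow> r = r'"
  by (simp add: cylA_binval)

lemma cylA_Suc_low: "i < 2 ^ k \<Longrightarrow> cylA i (Suc k) = cylA i k \<inter> {a. \<not> a k}"
  by (auto simp: cylA_binval binval_Suc)

lemma cylA_Suc_high:
  assumes "i < 2 ^ k"
  shows "cylA (i + 2 ^ k) (Suc k) = cylA i k \<inter> {a. a k}"
proof (intro set_eqI)
  fix a
  show "a \<in> cylA (i + 2 ^ k) (Suc k) \<longleftrightarrow> a \<in> cylA i k \<inter> {a. a k}"
    using binval_less[of k a] by (cases "a k") (auto simp: cylA_binval binval_Suc)
qed

lemma cylA_mult_pow2_subset:
  assumes "k \<le> j"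
  shows "cylA (2 ^ k * s) j \<subseteq> cylA 0 k"
proof
  fix a assume "a \<in> cylA (2 ^ k * s) j"
  then have "binval k a = (2 ^ k * s) mod 2 ^ k"
    using binval_mod[OF assms, of a] by (simp add: cylA_binval)
  then show "a \<in> cylA 0 k"
    by (simp add: cylA_binval)
qed

lemma cylA_0_eq_UN:
  assumes "k \<le> j"
  shows "cylA 0 k = (\<Union>s<2 ^ (j - k). cylA (2 ^ k * s) j)"
proof safe
  fix a assume "a \<in> cylA 0 k"
  then have "2 ^ k dvd binval j a"
    using binval_mod[OF assms, of a] by (simp add: cylA_binval mod_eq_0_iff_dvd)
  then obtain s where s: "binval j a = 2 ^ k * s" ..
  have "2 ^ k * s < 2 ^ k * 2 ^ (j - k)"
    using binval_less[of j a] assms by (simp add: s flip: power_add)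
  then show "a \<in> (\<Union>s<2 ^ (j - k). cylA (2 ^ k * s) j)"
    using s by (auto simp: cylA_binval)
next
  fix a s assume "a \<in> cylA (2 ^ k * s) j"
  then show "a \<in> cylA 0 k"
    using binval_mod[OF assms, of a] by (simp add: cylA_binval)
qed

lemma subcylinder_cylA_0:
  assumes "k \<le> j" "cylA r j \<subseteq> cylA 0 k" "cylA r j \<noteq> {}"
  obtains s where "s < 2 ^ (j - k)" "r = 2 ^ k * s"
proof -
  from assms(3) obtain a where a: "binval j a = r"
    by (auto simp: cylA_binval)
  with assms(2) have "a \<in> (\<Union>s<2 ^ (j - k). cylA (2 ^ k * s) j)"
    unfolding cylA_0_eq_UN[OF assms(1)] by (auto simp: cylA_binval)
  then show thesis
    using a that by (auto simp: cylA_binval)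
qed

section \<open>Sets of uniform density in a cylinder\<close>

lemma measure_uniform_density_eq:
  assumes F: "F \<in> sets bernoulliN" "F \<subseteq> cylA r k" and "0 \<le> c"
    and const: "\<And>j r'. k \<le> j \<Longrightarrow> cylA r' j \<subseteq> cylA r k \<Longrightarrow>
      measure bernoulliN (F \<inter> cylA r' j) = c * measure bernoulliN (cylA r' j)"
  shows "measure bernoulliN F = c * measure bernoulliN F"
proof -
  interpret bernoulliN: prob_space bernoulliN
    by (rule prob_space_bernoulliN)
  define M1 where "M1 = density bernoulliN (indicator F)"
  define M2 where "M2 = density (density bernoulliN (indicator (cylA r k))) (\<lambda>_. ennreal c)"
  have M1: "emeasure M1 X = ennreal (measure bernoulliN (F \<inter> X))" if "X \<in> sets bernoulliN" for X
    using that F by (simp add: M1_def emeasure_restricted bernoulliN.emeasure_eq_measure)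
  have M2: "emeasure M2 X = ennreal (c * measure bernoulliN (cylA r k \<inter> X))" if "X \<in> sets bernoulliN" for X
    using that \<open>0 \<le> c\<close>
    by (simp add: M2_def emeasure_density_const emeasure_restricted bernoulliN.emeasure_eq_measure ennreal_mult)
  have "M1 = M2"
  proof (rule measure_eqI_fine_cylinders[where k=k])
    show "finite_measure M1"
      unfolding M1_def using F by (intro bernoulliN.finite_measure_restricted) simp
    fix C assume "C \<in> fine_cylinders k"
    then obtain r' j where C: "C = cylA r' j" "k \<le> j"
      by (auto simp: fine_cylinders_def)
    show "emeasure M1 C = emeasure M2 C"
    proof (cases "cylA r k \<inter> C = {}")
      case True
      then have "F \<inter> C = {}" using F(2) by blast
      then show ?thesis using True by (simp add: C M1 M2)
    next
      case False
      then have "cylA r k \<inter> C = C"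
        using cylA_Int_cylA[OF C(2), of r r'] by (simp add: C split: if_splits)
      moreover from this have "C \<subseteq> cylA r k" by blast
      ultimately show ?thesis
        using const[OF C(2), of r'] by (simp add: C M1 M2)
    qed
  qed (simp_all add: M1_def M2_def)
  then have "emeasure M1 F = emeasure M2 F" by simp
  then show ?thesis
    using F \<open>0 \<le> c\<close> by (simp add: M1 M2 Int_absorb1 Int_absorb2)
qed

lemma measure_equidistributed_in_cylA_0:
  assumes F: "F \<in> sets bernoulliN" "F \<subseteq> cylA 0 k"
    and equi: "\<And>j s. k \<le> j \<Longrightarrow> s < 2 ^ (j - k) \<Longrightarrow>
      measure bernoulliN (F \<inter> cylA (2 ^ k * s) j) = measure bernoulliN (F \<inter> cylA 0 j)"
  shows "measure bernoulliN F = 0 \<or> 2 ^ k * measure bernoulliN F = 1"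
proof -
  interpret bernoulliN: prob_space bernoulliN
    by (rule prob_space_bernoulliN)
  have mass_split: "measure bernoulliN F = 2 ^ (j - k) * measure bernoulliN (F \<inter> cylA 0 j)" if "k \<le> j" for j
  proof -
    have "F = (\<Union>s<(2::nat) ^ (j - k). F \<inter> cylA (2 ^ k * s) j)"
      using F(2) cylA_0_eq_UN[OF that] by blast
    also have "measure bernoulliN \<dots> = (\<Sum>s<(2::nat) ^ (j - k). measure bernoulliN (F \<inter> cylA (2 ^ k * s) j))"
      using F(1) by (intro bernoulliN.finite_measure_finite_Union)
        (auto simp: disjoint_family_on_def dest: cylA_unique)
    also have "\<dots> = (\<Sum>s<(2::nat) ^ (j - k). measure bernoulliN (F \<inter> cylA 0 j))"
      using equi[OF that] by simp
    finally show ?thesis by simp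
  qed
  have "measure bernoulliN F = (2 ^ k * measure bernoulliN F) * measure bernoulliN F"
  proof (rule measure_uniform_density_eq[OF F])
    fix j r' assume j: "k \<le> j" and sub: "cylA r' j \<subseteq> cylA 0 k"
    show "measure bernoulliN (F \<inter> cylA r' j) = 2 ^ k * measure bernoulliN F * measure bernoulliN (cylA r' j)"
    proof (cases "cylA r' j = {}")
      case False
      then obtain s where s: "s < 2 ^ (j - k)" "r' = 2 ^ k * s"
        using subcylinder_cylA_0[OF j sub] by blast
      have "r' < 2 ^ j"
        using False cylA_eq_empty by blast
      have "(2::real) ^ k * (1/2) ^ j * 2 ^ (j - k) = 1"
        using j by (simp add: power_divide flip: power_add)
      then show ?thesis
        using mass_split[OF j] equi[OF j s(1)] \<open>r' < 2 ^ j\<close>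
        by (simp add: s measure_cylA field_simps)
    qed simp
  qed simp
  then show ?thesis
    by (metis mult_cancel_right1)
qed

section \<open>Iterates of measure-preserving maps\<close>

lemma measurable_funpow: "T \<in> M \<rightarrow>\<^sub>M M \<Longrightarrow> T ^^ n \<in> M \<rightarrow>\<^sub>M M"
  by (induction n) auto

lemma distr_funpow:
  assumes "T \<in> M \<rightarrow>\<^sub>M M" "distr M M T = M"
  shows "distr M M (T ^^ n) = M"
proof (induction n)
  case 0
  then show ?case by (simp add: id_def)
next
  case (Suc n)
  have "distr M M (T ^^ Suc n) = distr (distr M M (T ^^ n)) M T"
    using assms(1) by (simp add: distr_distr measurable_funpow comp_def)
  then show ?case using Suc assms(2) by (simp add: comp_def)
qed

lemma emeasure_vimage_eq:
  assumes "T \<in> M \<rightarrow>\<^sub>M M" "distr M M T = M" "A \<in> sets M"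
  shows "emeasure M (T -` A \<inter> space M) = emeasure M A"
  using emeasure_distr[OF assms(1,3)] assms(2) by simp

lemma AE_comp_of_distr_eq:
  assumes "T \<in> M \<rightarrow>\<^sub>M M" "distr M M T = M" "{x \<in> space M. P x} \<in> sets M" "AE x in M. P x"
  shows "AE x in M. P (T x)"
  using AE_distr_iff[OF assms(1,3)] assms(2,4) by metis

lemma ergodic_of_ergodic_funpow:
  assumes "ergodic M (T ^^ n)" "T \<in> M \<rightarrow>\<^sub>M M" "distr M M T = M"
  shows "ergodic M T"
  unfolding ergodic_def
proof (intro conjI assms(2,3) ballI impI)
  fix A assume A: "A \<in> sets M" and inv: "T -` A \<inter> space M = A"
  have "(T ^^ m) -` A \<inter> space M = A" for m
  proof (induction m)
    case 0
    then show ?case using sets.sets_into_space[OF A] by auto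
  next
    case (Suc m)
    have "(T ^^ Suc m) -` A \<inter> space M = T -` ((T ^^ m) -` A \<inter> space M) \<inter> space M"
      using measurable_space[OF assms(2)] by (auto simp del: funpow.simps simp: funpow_Suc_right)
    then show ?case using Suc inv by (simp add: comp_def)
  qed
  then show "emeasure M A = 0 \<or> emeasure M A = 1"
    using assms(1) A by (simp add: ergodic_def)
qed

lemma (in prob_space) ergodic_iff_prob:
  "ergodic M T \<longleftrightarrow> T \<in> M \<rightarrow>\<^sub>M M \<and> distr M M T = M \<and>
     (\<forall>A \<in> sets M. T -` A \<inter> space M = A \<longrightarrow> prob A = 0 \<or> prob A = 1)"
  by (simp add: ergodic_def emeasure_eq_measure)

lemma (in prob_space) AE_eq_complement:
  assumes "X \<in> sets M" "Y \<in> sets M" "prob (X \<inter> Y) = 0" "prob (X \<union> Y) = 1"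
  shows "AE x in M. x \<in> Y \<longleftrightarrow> x \<notin> X"
proof -
  have "AE x in M. x \<notin> X \<inter> Y" "AE x in M. x \<in> X \<union> Y"
    using assms by (simp_all add: prob_eq_0 prob_eq_1 sets.Int sets.Un)
  then show ?thesis by eventually_elim blast
qed

lemma (in prob_space) prob_half_of_antiperiodic:
  assumes T: "T \<in> M \<rightarrow>\<^sub>M M" "distr M M T = M" and A: "A \<in> sets M"
    and anti: "AE x in M. T (T x) \<in> A \<longleftrightarrow> x \<notin> A"
  shows "prob {x \<in> space M. (x \<in> A \<and> T x \<in> A) \<or> (T (T x) \<in> A \<and> T (T (T x)) \<in> A)} = 1/2"
    (is "prob ?U = _")
proof -
  note [measurable] = T(1) A
  have anti1: "AE x in M. T (T (T x)) \<in> A \<longleftrightarrow> T x \<notin> A"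
    by (rule AE_comp_of_distr_eq[OF T _ anti]) measurable
  have anti2: "AE x in M. T (T (T (T x))) \<in> A \<longleftrightarrow> T (T x) \<notin> A"
    by (rule AE_comp_of_distr_eq[OF T _ anti1]) measurable
  have "AE x in M. x \<in> T -` ?U \<inter> space M \<longleftrightarrow> x \<in> space M - ?U"
    using anti anti1 anti2 AE_space by eventually_elim (auto simp: measurable_space[OF T(1)])
  then have "prob (T -` ?U \<inter> space M) = 1 - prob ?U"
    by (subst measure_eq_AE[where B="space M - ?U"]) (simp_all add: prob_compl)
  moreover have "prob (T -` ?U \<inter> space M) = prob ?U"
    using emeasure_vimage_eq[OF T, of ?U] by (simp add: emeasure_eq_measure)
  ultimately show ?thesis
    by simp
qed

lemma (in prob_space) ergodic_funpow_four:
  assumes T: "T \<in> M \<rightarrow>\<^sub>M M" "distr M M T = M" and erg2: "ergodic M (T ^^ 2)"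
  shows "ergodic M (T ^^ 4)"
  unfolding ergodic_iff_prob
proof (intro conjI ballI impI measurable_funpow distr_funpow T)
  note [measurable] = T(1)
  have T_space: "T x \<in> space M" if "x \<in> space M" for x
    using measurable_space[OF T(1) that] .
  have inv2: "prob X = 0 \<or> prob X = 1"
    if "X \<in> sets M" "\<And>x. x \<in> space M \<Longrightarrow> T (T x) \<in> X \<longleftrightarrow> x \<in> X" for X
  proof -
    have "(T ^^ 2) -` X \<inter> space M = X"
      using that sets.sets_into_space[OF that(1)] by (auto simp: numeral_2_eq_2)
    then show ?thesis
      using erg2 that(1) by (simp add: ergodic_iff_prob)
  qed
  fix A assume A: "A \<in> sets M" "(T ^^ 4) -` A \<inter> space M = A"
  note [measurable] = A(1)
  have A4: "T (T (T (T x))) \<in> A \<longleftrightarrow> x \<in> A" if "x \<in> space M" for x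
    using A(2) that by (auto simp: numeral_eq_Suc)
  define A2 where "A2 = {x \<in> space M. T (T x) \<in> A}"
  have A2_sets [measurable]: "A2 \<in> sets M"
    unfolding A2_def by measurable
  have "prob (A \<inter> A2) = 0 \<or> prob (A \<inter> A2) = 1" "prob (A \<union> A2) = 0 \<or> prob (A \<union> A2) = 1"
    using A4 T_space sets.sets_into_space[OF A(1)] by (intro inv2; force simp: A2_def)+
  moreover have "prob (A \<inter> A2) \<le> prob A" "prob A \<le> prob (A \<union> A2)"
    by (auto intro!: finite_measure_mono)
  ultimately consider "prob A = 0 \<or> prob A = 1" | "prob (A \<inter> A2) = 0" "prob (A \<union> A2) = 1"
    using prob_le_1[of A] measure_nonneg[of M A] by linarith
  then show "prob A = 0 \<or> prob A = 1"
  proof cases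
    case 2
    define U where "U = {x \<in> space M. (x \<in> A \<and> T x \<in> A) \<or> (T (T x) \<in> A \<and> T (T (T x)) \<in> A)}"
    have "AE x in M. T (T x) \<in> A \<longleftrightarrow> x \<notin> A"
      using AE_eq_complement[OF A(1) A2_sets 2] AE_space by eventually_elim (auto simp: A2_def)
    then have "prob U = 1/2"
      unfolding U_def by (rule prob_half_of_antiperiodic[OF T A(1)])
    moreover have "prob U = 0 \<or> prob U = 1"
      using A4 T_space by (intro inv2) (auto simp: U_def)
    ultimately show ?thesis
      by simp
  qed
qed

lemma (in prob_space) ergodic_funpow_pow2:
  assumes T: "T \<in> M \<rightarrow>\<^sub>M M" "distr M M T = M" and erg2: "ergodic M (T ^^ 2)"
  shows "ergodic M (T ^^ (2 ^ m))"
proof (cases m)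
  case 0
  then show ?thesis using ergodic_of_ergodic_funpow[OF erg2 T] by simp
next
  case (Suc m')
  have "ergodic M (T ^^ (2 ^ Suc m'))"
  proof (induction m')
    case (Suc m')
    have "ergodic M ((T ^^ (2 ^ m')) ^^ 4)"
      using Suc.IH by (intro ergodic_funpow_four measurable_funpow distr_funpow T)
        (simp add: funpow_mult mult.commute)
    then show ?case by (simp add: funpow_mult mult.commute)
  qed (simp add: erg2)
  then show ?thesis using Suc by simp
qed

lemma (in prob_space) prob_expectation_less_ne_1:
  fixes g :: "'a \<Rightarrow> real"
  assumes "integrable M g"
  shows "prob {x \<in> space M. expectation g < g x} \<noteq> 1"
proof
  assume "prob {x \<in> space M. expectation g < g x} = 1"
  then have "AE x in M. expectation g < g x"
    using assms by (subst (asm) prob_Collect_eq_1) auto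
  then have "expectation (\<lambda>_. expectation g) < expectation g"
    using assms by (intro integral_less_AE_space) (auto simp: emeasure_space_1)
  then show False by (simp add: prob_space)
qed

lemma (in prob_space) ergodic_AE_eq_expectation:
  fixes g :: "'a \<Rightarrow> real"
  assumes erg: "ergodic M T" and g: "integrable M g"
    and inv: "\<And>x. x \<in> space M \<Longrightarrow> g (T x) = g x"
  shows "AE x in M. g x = expectation g"
proof -
  have T: "T \<in> M \<rightarrow>\<^sub>M M"
    using erg by (simp add: ergodic_def)
  have prob_0_1: "prob {x \<in> space M. c < f x} = 0 \<or> prob {x \<in> space M. c < f x} = 1"
    if "f \<in> borel_measurable M" "\<And>x. x \<in> space M \<Longrightarrow> f (T x) = f x" for f :: "'a \<Rightarrow> real" and c
  proof -
    have "{x \<in> space M. c < f x} \<in> sets M"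
      using that(1) by measurable
    moreover have "T -` {x \<in> space M. c < f x} \<inter> space M = {x \<in> space M. c < f x}"
      using that(2) measurable_space[OF T] by auto
    ultimately show ?thesis
      using erg by (simp add: ergodic_iff_prob)
  qed
  have "prob {x \<in> space M. expectation g < g x} = 0"
    using prob_0_1[of g "expectation g"] prob_expectation_less_ne_1[OF g] inv g by auto
  moreover have "prob {x \<in> space M. expectation (\<lambda>x. - g x) < - g x} = 0"
    using prob_0_1[of "\<lambda>x. - g x" "expectation (\<lambda>x. - g x)"]
      prob_expectation_less_ne_1[of "\<lambda>x. - g x"] inv g by auto
  ultimately have "AE x in M. \<not> expectation g < g x" "AE x in M. \<not> g x < expectation g"
    using g by (simp_all add: prob_Collect_eq_0)
  then show ?thesis by eventually_elim simp
qed

lemma vimage_funpow_eq: "f -` E = E \<Longrightarrow> (f ^^ n) -` E = E"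
  by (induction n) (simp_all add: vimage_comp[symmetric])

section \<open>The shift and the measure of periodic type\<close>

lemma space_seqZ [simp]: "space seqZ = UNIV"
  by (simp add: seqZ_def space_PiM PiE_UNIV_domain)

lemma shiftZ_funpow: "(shiftZ ^^ n) x = (\<lambda>i. x (i + int n))"
  by (induction n arbitrary: x) (auto simp: shiftZ_def algebra_simps)

lemma measurable_shiftZ_funpow [measurable]: "shiftZ ^^ n \<in> seqZ \<rightarrow>\<^sub>M seqZ"
  unfolding shiftZ_funpow[abs_def] seqZ_def
  by (rule measurable_PiM_single') (auto simp: space_PiM)

lemma measurable_shiftZ [measurable]: "shiftZ \<in> seqZ \<rightarrow>\<^sub>M seqZ"
  using measurable_shiftZ_funpow[of 1] by simp

lemma emeasure_measure_of_sum:
  assumes "finite I" "\<And>i. i \<in> I \<Longrightarrow> sets (N i) = sets M" "A \<in> sets M"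
  shows "emeasure (measure_of (space M) (sets M) (\<lambda>B. \<Sum>i\<in>I. emeasure (N i) B)) A
    = (\<Sum>i\<in>I. emeasure (N i) A)"
proof (rule emeasure_measure_of_sigma[OF sets.sigma_algebra_axioms _ _ assms(3)])
  show "positive (sets M) (\<lambda>B. \<Sum>i\<in>I. emeasure (N i) B)"
    by (simp add: positive_def)
  show "countably_additive (sets M) (\<lambda>B. \<Sum>i\<in>I. emeasure (N i) B)"
    unfolding countably_additive_def
  proof (intro allI impI)
    fix F :: "nat \<Rightarrow> _" assume F: "range F \<subseteq> sets M" "disjoint_family F"
    have "(\<Sum>n. \<Sum>i\<in>I. emeasure (N i) (F n)) = (\<Sum>i\<in>I. \<Sum>n. emeasure (N i) (F n))"
      by (rule suminf_sum) (rule summableI)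
    also have "\<dots> = (\<Sum>i\<in>I. emeasure (N i) (\<Union>n. F n))"
      using F assms(2) by (intro sum.cong refl suminf_emeasure) auto
    finally show "(\<Sum>n. \<Sum>i\<in>I. emeasure (N i) (F n)) = (\<Sum>i\<in>I. emeasure (N i) (\<Union>n. F n))" .
  qed
qed

lemma measurable_emeasure_section [measurable (raw)]:
  assumes "A \<in> sets (seqZ \<Otimes>\<^sub>M bernoulliN)" "C \<in> sets bernoulliN"
  shows "(\<lambda>x. emeasure bernoulliN (Pair x -` A \<inter> C)) \<in> borel_measurable seqZ"
proof -
  interpret bernoulliN: prob_space bernoulliN
    by (rule prob_space_bernoulliN)
  have "A \<inter> (UNIV \<times> C) \<in> sets (seqZ \<Otimes>\<^sub>M bernoulliN)"
    using assms sets.top[of seqZ] by (intro sets.Int pair_measureI) auto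
  then have "(\<lambda>x. emeasure bernoulliN (Pair x -` (A \<inter> (UNIV \<times> C)))) \<in> borel_measurable seqZ"
    by (rule bernoulliN.measurable_emeasure_Pair)
  moreover have "Pair x -` (A \<inter> (UNIV \<times> C)) = Pair x -` A \<inter> C" for x
    by auto
  ultimately show ?thesis by simp
qed

lemma emeasure_shift_push_pair_density:
  assumes "sets \<eta> = sets seqZ" "A \<in> sets (seqZ \<Otimes>\<^sub>M bernoulliN)" "C \<in> sets bernoulliN"
  shows "emeasure (shift_push i \<eta> \<Otimes>\<^sub>M density bernoulliN (indicator C)) A
    = (\<integral>\<^sup>+ y. emeasure bernoulliN (Pair ((shiftZ ^^ i) y) -` A \<inter> C) \<partial>\<eta>)"
proof -
  interpret finite_measure "density bernoulliN (indicator C)"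
    using prob_space_bernoulliN assms(3)
    by (intro finite_measure.finite_measure_restricted) (auto simp: prob_space_def)
  have shift_meas: "shiftZ ^^ i \<in> \<eta> \<rightarrow>\<^sub>M seqZ"
    unfolding measurable_cong_sets[OF assms(1) refl] by simp
  have "A \<in> sets (shift_push i \<eta> \<Otimes>\<^sub>M density bernoulliN (indicator C))"
    using assms(2) by (simp add: shift_push_def cong: sets_pair_measure_cong)
  then have "emeasure (shift_push i \<eta> \<Otimes>\<^sub>M density bernoulliN (indicator C)) A
      = (\<integral>\<^sup>+ x. emeasure (density bernoulliN (indicator C)) (Pair x -` A) \<partial>shift_push i \<eta>)"
    by (rule emeasure_pair_measure_alt)
  also have "\<dots> = (\<integral>\<^sup>+ x. emeasure bernoulliN (Pair x -` A \<inter> C) \<partial>distr \<eta> seqZ (shiftZ ^^ i))"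
    using sets_Pair1[OF assms(2)] assms(3)
    by (auto simp: shift_push_def emeasure_restricted Int_commute intro!: nn_integral_cong)
  also have "\<dots> = (\<integral>\<^sup>+ y. emeasure bernoulliN (Pair ((shiftZ ^^ i) y) -` A \<inter> C) \<partial>\<eta>)"
    using assms(2,3) by (intro nn_integral_distr shift_meas) simp
  finally show ?thesis .
qed

lemma sets_periodic_type [simp]: "sets (periodic_type k \<eta>) = sets (seqZ \<Otimes>\<^sub>M bernoulliN)"
  unfolding periodic_type_def by (rule sets.sets_measure_of_eq)

lemma space_periodic_type [simp]: "space (periodic_type k \<eta>) = UNIV"
  using sets_eq_imp_space_eq[OF sets_periodic_type[of k \<eta>]] by (simp add: space_pair_measure)

lemma emeasure_periodic_type:
  assumes "sets \<eta> = sets seqZ" "A \<in> sets (seqZ \<Otimes>\<^sub>M bernoulliN)"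
  shows "emeasure (periodic_type k \<eta>) A
    = (\<Sum>i<2 ^ k. \<integral>\<^sup>+ y. emeasure bernoulliN (Pair ((shiftZ ^^ i) y) -` A \<inter> cylA i k) \<partial>\<eta>)"
proof -
  have sets: "sets (shift_push i \<eta> \<Otimes>\<^sub>M density bernoulliN (indicator (cylA i k)))
      = sets (seqZ \<Otimes>\<^sub>M bernoulliN)" for i
    by (intro sets_pair_measure_cong) (simp_all add: shift_push_def)
  have "emeasure (periodic_type k \<eta>) A
      = (\<Sum>i<2 ^ k. emeasure (shift_push i \<eta> \<Otimes>\<^sub>M density bernoulliN (indicator (cylA i k))) A)"
    unfolding periodic_type_def by (rule emeasure_measure_of_sum) (use sets assms(2) in auto)
  then show ?thesis
    using emeasure_shift_push_pair_density[OF assms sets_cylA] by simp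
qed

lemma map_prod_funpow:
  fixes f :: "'a \<Rightarrow> 'a" and g :: "'b \<Rightarrow> 'b"
  shows "(map_prod f g ^^ n) (x, y) = ((f ^^ n) x, (g ^^ n) y)"
  by (induction n) simp_all

lemma measurable_shift_odometer [measurable]:
  "map_prod shiftZ odometer \<in> seqZ \<Otimes>\<^sub>M bernoulliN \<rightarrow>\<^sub>M seqZ \<Otimes>\<^sub>M bernoulliN"
  unfolding map_prod_def by measurable

lemma measurable_shift_odometer_periodic_type:
  "map_prod shiftZ odometer \<in> periodic_type k \<eta> \<rightarrow>\<^sub>M periodic_type k \<eta>"
  using measurable_cong_sets[OF sets_periodic_type sets_periodic_type] by simp

lemma emeasure_section_shift_odometer_funpow:
  assumes "A \<in> sets (seqZ \<Otimes>\<^sub>M bernoulliN)" "r < 2 ^ j"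
  shows "emeasure bernoulliN (Pair x -` ((map_prod shiftZ odometer ^^ n) -` A) \<inter> cylA r j)
    = emeasure bernoulliN (Pair ((shiftZ ^^ n) x) -` A \<inter> cylA ((r + n) mod 2 ^ j) j)"
proof -
  have "Pair x -` ((map_prod shiftZ odometer ^^ n) -` A) \<inter> cylA r j
      = (odometer ^^ n) -` (Pair ((shiftZ ^^ n) x) -` A \<inter> cylA ((r + n) mod 2 ^ j) j)"
    using vimage_odometer_funpow_cylA[OF assms(2), of n] by (auto simp: map_prod_funpow)
  moreover have "Pair ((shiftZ ^^ n) x) -` A \<inter> cylA ((r + n) mod 2 ^ j) j \<in> sets bernoulliN"
    using sets_Pair1[OF assms(1)] by simp
  ultimately show ?thesis
    using emeasure_distr[OF measurable_odometer_funpow[of n]] distr_odometer_funpow[of n] by simp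
qed

lemma distr_periodic_type:
  assumes "sets \<eta> = sets seqZ" and inv: "distr \<eta> seqZ (shiftZ ^^ 2 ^ k) = \<eta>"
  shows "distr (periodic_type k \<eta>) (periodic_type k \<eta>) (map_prod shiftZ odometer) = periodic_type k \<eta>"
proof (rule measure_eqI)
  fix A assume "A \<in> sets (distr (periodic_type k \<eta>) (periodic_type k \<eta>) (map_prod shiftZ odometer))"
  then have A: "A \<in> sets (seqZ \<Otimes>\<^sub>M bernoulliN)" by simp
  define N :: nat where "N = 2 ^ k"
  have "N > 0" by (simp add: N_def)
  define t where "t i = (\<integral>\<^sup>+ y. emeasure bernoulliN (Pair ((shiftZ ^^ i) y) -` A \<inter> cylA (i mod N) k) \<partial>\<eta>)" for i
  \<comment> \<open>The \<open>i\<close>-th summand of \<open>D_k[eta]((S \<times> O)\<^sup>-\<^sup>1 A)\<close> is \<open>t (i + 1)\<close>; the wrap-around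
    summand \<open>t N\<close> equals \<open>t 0\<close> by the \<open>S^N\<close>-invariance of \<open>\<eta>\<close>.\<close>
  have "t N = t 0"
  proof -
    have "t N = (\<integral>\<^sup>+ y. emeasure bernoulliN (Pair ((shiftZ ^^ N) y) -` A \<inter> cylA 0 k) \<partial>\<eta>)"
      by (simp add: t_def)
    also have "\<dots> = (\<integral>\<^sup>+ y. emeasure bernoulliN (Pair y -` A \<inter> cylA 0 k) \<partial>distr \<eta> seqZ (shiftZ ^^ N))"
      using A by (intro nn_integral_distr[symmetric]) (simp_all add: measurable_cong_sets[OF assms(1) refl])
    also have "\<dots> = t 0"
      using inv by (simp add: t_def N_def)
    finally show ?thesis .
  qed
  then have t_Suc: "t (Suc i) = t ((i + 1) mod N)" if "i < N" for i
    using that by (cases "Suc i = N") simp_all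
  have "map_prod shiftZ odometer -` A \<in> sets (seqZ \<Otimes>\<^sub>M bernoulliN)"
    using measurable_sets[OF measurable_shift_odometer A] by (simp add: space_pair_measure)
  then have "emeasure (periodic_type k \<eta>) (map_prod shiftZ odometer -` A)
      = (\<Sum>i<N. \<integral>\<^sup>+ y. emeasure bernoulliN
          (Pair ((shiftZ ^^ i) y) -` (map_prod shiftZ odometer -` A) \<inter> cylA i k) \<partial>\<eta>)"
    using assms(1) by (simp add: emeasure_periodic_type N_def)
  also have "\<dots> = (\<Sum>i<N. t (Suc i))"
    unfolding t_def using emeasure_section_shift_odometer_funpow[OF A, where n=1]
    by (intro sum.cong refl nn_integral_cong) (simp add: N_def)
  also have "\<dots> = (\<Sum>i<N. t ((i + 1) mod N))"
    by (intro sum.cong refl t_Suc) simp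
  also have "\<dots> = (\<Sum>i<N. t i)"
    using sum.reindex_bij_betw[OF bij_betw_add_mod[OF \<open>N > 0\<close>, of 1], of t] by simp
  also have "\<dots> = emeasure (periodic_type k \<eta>) A"
    using A assms(1) by (simp add: emeasure_periodic_type N_def t_def)
  finally show "emeasure (distr (periodic_type k \<eta>) (periodic_type k \<eta>) (map_prod shiftZ odometer)) A
      = emeasure (periodic_type k \<eta>) A"
    using A by (simp add: emeasure_distr[OF measurable_shift_odometer_periodic_type])
qed simp

section \<open>Ergodicity of the measure of periodic type\<close>

definition section_measure :: "('a \<times> (nat \<Rightarrow> bool)) set \<Rightarrow> nat \<Rightarrow> nat \<Rightarrow> 'a \<Rightarrow> real" where
  "section_measure E j r x = measure bernoulliN (Pair x -` E \<inter> cylA r j)"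

lemma measurable_section_measure [measurable]:
  "E \<in> sets (seqZ \<Otimes>\<^sub>M bernoulliN) \<Longrightarrow> section_measure E j r \<in> borel_measurable seqZ"
  unfolding section_measure_def[abs_def] measure_def
  by (intro borel_measurable_enn2real measurable_emeasure_section) simp_all

lemma section_measure_nonneg: "0 \<le> section_measure E j r x"
  by (simp add: section_measure_def)

lemma abs_section_measure_le_1: "\<bar>section_measure E j r x\<bar> \<le> 1"
  using prob_space.prob_le_1[OF prob_space_bernoulliN] by (simp add: section_measure_def)

lemma section_measure_shift:
  assumes E: "E \<in> sets (seqZ \<Otimes>\<^sub>M bernoulliN)" "map_prod shiftZ odometer -` E = E" and "r < 2 ^ j"
  shows "section_measure E j r x = section_measure E j ((r + n) mod 2 ^ j) ((shiftZ ^^ n) x)"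
  using emeasure_section_shift_odometer_funpow[OF E(1) \<open>r < 2 ^ j\<close>, of x n] vimage_funpow_eq[OF E(2), of n]
  by (simp add: section_measure_def measure_def)

lemma section_measure_equidistributed_0_or_1:
  assumes E: "E \<in> sets (seqZ \<Otimes>\<^sub>M bernoulliN)"
    and equi: "\<And>j s. k \<le> j \<Longrightarrow> s < 2 ^ (j - k) \<Longrightarrow>
      section_measure E j (2 ^ k * s) x = section_measure E j 0 x"
  shows "section_measure E k 0 x = 0 \<or> 2 ^ k * section_measure E k 0 x = 1"
proof -
  define F where "F = Pair x -` E \<inter> cylA 0 k"
  have F: "F \<in> sets bernoulliN" "F \<subseteq> cylA 0 k"
    using sets_Pair1[OF E] by (auto simp: F_def)
  have F_Int: "F \<inter> cylA (2 ^ k * s) j = Pair x -` E \<inter> cylA (2 ^ k * s) j" if "k \<le> j" for j s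
    using cylA_mult_pow2_subset[OF that] by (auto simp: F_def)
  have "measure bernoulliN F = 0 \<or> 2 ^ k * measure bernoulliN F = 1"
  proof (rule measure_equidistributed_in_cylA_0[OF F])
    fix j s :: nat assume "k \<le> j" "s < 2 ^ (j - k)"
    then show "measure bernoulliN (F \<inter> cylA (2 ^ k * s) j) = measure bernoulliN (F \<inter> cylA 0 j)"
      using equi F_Int[of j s] F_Int[of j 0] by (simp add: section_measure_def)
  qed
  then show ?thesis
    by (simp add: F_def section_measure_def)
qed

locale periodic_base = prob_space \<eta> for \<eta> :: "(int \<Rightarrow> bool) measure" +
  fixes k :: nat
  assumes sets_eq: "sets \<eta> = sets seqZ"
    and distr_shiftZ: "distr \<eta> seqZ (shiftZ ^^ 2 ^ k) = \<eta>"
begin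

lemma measurable_shiftZ_funpow_eta: "shiftZ ^^ n \<in> \<eta> \<rightarrow>\<^sub>M \<eta>"
  using measurable_cong_sets[OF sets_eq sets_eq] by simp

lemma measurable_shiftZ_funpow_seqZ: "shiftZ ^^ n \<in> \<eta> \<rightarrow>\<^sub>M seqZ"
  by (simp only: measurable_cong_sets[OF sets_eq refl] measurable_shiftZ_funpow)

lemma borel_measurable_eta: "f \<in> borel_measurable seqZ \<Longrightarrow> f \<in> borel_measurable \<eta>"
  by (simp only: measurable_cong_sets[OF sets_eq refl])

lemma distr_shiftZ_eta: "distr \<eta> \<eta> (shiftZ ^^ 2 ^ k) = \<eta>"
proof -
  have "distr \<eta> \<eta> (shiftZ ^^ 2 ^ k) = distr \<eta> seqZ (shiftZ ^^ 2 ^ k)"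
    by (rule distr_cong) (simp_all add: sets_eq)
  then show ?thesis using distr_shiftZ by simp
qed

lemma space_eta: "space \<eta> = UNIV"
  using sets_eq_imp_space_eq[OF sets_eq] by simp

lemma ergodic_shiftZ_pow2:
  assumes "ergodic \<eta> (shiftZ ^^ 2 ^ (k + 1))" "k \<le> j"
  shows "ergodic \<eta> (shiftZ ^^ 2 ^ j)"
proof -
  have "ergodic \<eta> ((shiftZ ^^ 2 ^ k) ^^ 2)"
    using assms(1) by (simp add: funpow_mult power_add mult.commute)
  then have "ergodic \<eta> ((shiftZ ^^ 2 ^ k) ^^ 2 ^ (j - k))"
    by (intro ergodic_funpow_pow2 measurable_shiftZ_funpow_eta distr_shiftZ_eta)
  then show ?thesis
    using assms(2) by (simp add: funpow_mult flip: power_add)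
qed

context
  fixes E assumes E: "E \<in> sets (seqZ \<Otimes>\<^sub>M bernoulliN)" "map_prod shiftZ odometer -` E = E"
begin

lemma integrable_section_measure: "integrable \<eta> (section_measure E j r)"
  by (intro integrable_const_bound[where B=1] AE_I2 borel_measurable_eta measurable_section_measure E(1))
    (simp add: abs_section_measure_le_1)

lemma AE_section_measure_eq_expectation:
  assumes "ergodic \<eta> (shiftZ ^^ 2 ^ (k + 1))" "k \<le> j" "r < 2 ^ j"
  shows "AE x in \<eta>. section_measure E j r x = expectation (section_measure E j r)"
proof (rule ergodic_AE_eq_expectation[OF ergodic_shiftZ_pow2[OF assms(1,2)] integrable_section_measure])
  fix x
  show "section_measure E j r ((shiftZ ^^ 2 ^ j) x) = section_measure E j r x"
    using section_measure_shift[OF E assms(3), of x "2 ^ j"] assms(3) by simp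
qed

lemma expectation_section_measure_shift:
  assumes "r < 2 ^ j"
  shows "expectation (section_measure E j r) = expectation (section_measure E j ((r + 2 ^ k) mod 2 ^ j))"
proof -
  have "expectation (section_measure E j r)
      = expectation (\<lambda>x. section_measure E j ((r + 2 ^ k) mod 2 ^ j) ((shiftZ ^^ 2 ^ k) x))"
    using section_measure_shift[OF E assms] by simp
  also have "\<dots> = integral\<^sup>L (distr \<eta> seqZ (shiftZ ^^ 2 ^ k)) (section_measure E j ((r + 2 ^ k) mod 2 ^ j))"
    using E(1) by (intro integral_distr[symmetric] measurable_shiftZ_funpow_seqZ) simp
  finally show ?thesis
    using distr_shiftZ by simp
qed

lemma expectation_section_measure_cylA_0:
  assumes "k \<le> j" "s < 2 ^ (j - k)"
  shows "expectation (section_measure E j (2 ^ k * s)) = expectation (section_measure E j 0)"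
  using assms(2)
proof (induction s)
  case (Suc s)
  have "2 ^ k * Suc s < 2 ^ k * 2 ^ (j - k)"
    by (rule mult_less_mono2[OF Suc.prems]) simp
  then have "2 ^ k * Suc s < 2 ^ j"
    using assms(1) by (simp flip: power_add)
  then show ?case
    using expectation_section_measure_shift[of "2 ^ k * s" j] Suc by (simp add: algebra_simps)
qed simp

lemma emeasure_periodic_type_invariant:
  "emeasure (periodic_type k \<eta>) E = ennreal (2 ^ k * expectation (section_measure E k 0))"
proof -
  interpret bernoulliN: prob_space bernoulliN
    by (rule prob_space_bernoulliN)
  have "emeasure bernoulliN (Pair ((shiftZ ^^ i) y) -` E \<inter> cylA i k) = ennreal (section_measure E k 0 y)"
    if "i < 2 ^ k" for i y
    using section_measure_shift[OF E, of 0 k y i] that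
    by (simp add: section_measure_def bernoulliN.emeasure_eq_measure)
  then have "emeasure (periodic_type k \<eta>) E
      = (\<Sum>i<(2::nat) ^ k. \<integral>\<^sup>+ y. ennreal (section_measure E k 0 y) \<partial>\<eta>)"
    by (simp add: emeasure_periodic_type[OF sets_eq E(1)])
  also have "\<dots> = (\<Sum>i<(2::nat) ^ k. ennreal (expectation (section_measure E k 0)))"
    by (subst nn_integral_eq_integral) (simp_all add: integrable_section_measure section_measure_nonneg)
  also have "\<dots> = ennreal (2 ^ k * expectation (section_measure E k 0))"
  proof -
    have "0 \<le> expectation (section_measure E k 0)"
      by (rule Bochner_Integration.integral_nonneg) (simp add: section_measure_nonneg)
    then show ?thesis by (simp add: ennreal_mult ennreal_of_nat_eq_real_of_nat)
  qed
  finally show ?thesis .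
qed

lemma AE_section_measure_equidistributed:
  assumes erg: "ergodic \<eta> (shiftZ ^^ 2 ^ (k + 1))"
  shows "AE x in \<eta>. \<forall>j s. k \<le> j \<longrightarrow> s < 2 ^ (j - k) \<longrightarrow>
    section_measure E j (2 ^ k * s) x = section_measure E j 0 x"
proof -
  have "AE x in \<eta>. k \<le> j \<longrightarrow> s < 2 ^ (j - k) \<longrightarrow>
      section_measure E j (2 ^ k * s) x = section_measure E j 0 x" for j s
  proof (cases "k \<le> j \<and> s < 2 ^ (j - k)")
    case True
    then have "2 ^ k * s < 2 ^ k * 2 ^ (j - k)"
      by simp
    then have "2 ^ k * s < 2 ^ j"
      using True by (simp flip: power_add)
    then have "AE x in \<eta>. section_measure E j (2 ^ k * s) x = expectation (section_measure E j (2 ^ k * s))"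
      using AE_section_measure_eq_expectation[OF erg] True by blast
    moreover have "AE x in \<eta>. section_measure E j 0 x = expectation (section_measure E j 0)"
      using AE_section_measure_eq_expectation[OF erg, of j 0] True by simp
    moreover have eq: "expectation (section_measure E j (2 ^ k * s)) = expectation (section_measure E j 0)"
      using expectation_section_measure_cylA_0[of j s] True by simp
    ultimately show ?thesis
      by eventually_elim (simp add: eq)
  qed simp
  then show ?thesis
    by (simp add: AE_all_countable)
qed

lemma periodic_type_invariant_0_or_1:
  assumes erg: "ergodic \<eta> (shiftZ ^^ 2 ^ (k + 1))"
  shows "emeasure (periodic_type k \<eta>) E = 0 \<or> emeasure (periodic_type k \<eta>) E = 1"
proof -
  have "AE x in \<eta>. section_measure E k 0 x = expectation (section_measure E k 0)"
    using AE_section_measure_eq_expectation[OF erg, of k 0] by simp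
  then have "\<exists>x. (\<forall>j s. k \<le> j \<longrightarrow> s < 2 ^ (j - k) \<longrightarrow>
      section_measure E j (2 ^ k * s) x = section_measure E j 0 x) \<and>
      section_measure E k 0 x = expectation (section_measure E k 0)"
    using AE_section_measure_equidistributed[OF erg]
    by (intro eventually_happens'[OF ae_filter_bot] eventually_conj)
  then obtain x0 where
    "\<And>j s. k \<le> j \<Longrightarrow> s < 2 ^ (j - k) \<Longrightarrow>
      section_measure E j (2 ^ k * s) x0 = section_measure E j 0 x0"
    and x0: "section_measure E k 0 x0 = expectation (section_measure E k 0)"
    by blast
  then have "section_measure E k 0 x0 = 0 \<or> 2 ^ k * section_measure E k 0 x0 = 1"
    by (intro section_measure_equidistributed_0_or_1[OF E(1)])
  then show ?thesis
    by (auto simp: emeasure_periodic_type_invariant x0)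
qed

end

lemma ergodic_periodic_type:
  assumes "ergodic \<eta> (shiftZ ^^ 2 ^ (k + 1))"
  shows "ergodic (periodic_type k \<eta>) (map_prod shiftZ odometer)"
  unfolding ergodic_def
proof (intro conjI ballI impI measurable_shift_odometer_periodic_type)
  show "distr (periodic_type k \<eta>) (periodic_type k \<eta>) (map_prod shiftZ odometer) = periodic_type k \<eta>"
    by (rule distr_periodic_type[OF sets_eq distr_shiftZ])
  fix E assume "E \<in> sets (periodic_type k \<eta>)"
    "map_prod shiftZ odometer -` E \<inter> space (periodic_type k \<eta>) = E"
  then show "emeasure (periodic_type k \<eta>) E = 0 \<or> emeasure (periodic_type k \<eta>) E = 1"
    using periodic_type_invariant_0_or_1[OF _ _ assms] by simp
qed

end

section \<open>Ergodicity of the base measure\<close>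

definition unshiftZ :: "nat \<Rightarrow> (int \<Rightarrow> bool) \<Rightarrow> (int \<Rightarrow> bool)" where
  "unshiftZ n x = (\<lambda>i. x (i - int n))"

lemma measurable_unshiftZ [measurable]: "unshiftZ n \<in> seqZ \<rightarrow>\<^sub>M seqZ"
  unfolding unshiftZ_def[abs_def] seqZ_def
  by (rule measurable_PiM_single') (auto simp: space_PiM)

lemma unshiftZ_add_shiftZ_funpow: "unshiftZ (m + n) ((shiftZ ^^ n) x) = unshiftZ m x"
  by (simp add: unshiftZ_def shiftZ_funpow algebra_simps)

lemma shiftZ_funpow_add_unshiftZ: "(shiftZ ^^ (m + n)) (unshiftZ n x) = (shiftZ ^^ m) x"
  by (simp add: unshiftZ_def shiftZ_funpow algebra_simps)

lemma unshiftZ_0 [simp]: "unshiftZ 0 x = x"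
  by (simp add: unshiftZ_def)

text \<open>The set \<open>\<Union>n<2^(k+1). S^n A \<times> A_{n,k+1}\<close>; it is invariant under \<open>S \<times> O\<close>
  whenever \<open>A\<close> is invariant under \<open>S^(2^(k+1))\<close>.\<close>

definition periodic_lift :: "nat \<Rightarrow> (int \<Rightarrow> bool) set \<Rightarrow> ((int \<Rightarrow> bool) \<times> (nat \<Rightarrow> bool)) set" where
  "periodic_lift k A = {(x, a). unshiftZ (binval (Suc k) a) x \<in> A}"

lemma sets_periodic_lift:
  assumes "A \<in> sets seqZ"
  shows "periodic_lift k A \<in> sets (seqZ \<Otimes>\<^sub>M bernoulliN)"
proof -
  have "periodic_lift k A = (\<Union>n<2 ^ Suc k. (unshiftZ n -` A) \<times> cylA n (Suc k))"
    using binval_less[of "Suc k"] by (auto simp: periodic_lift_def cylA_binval)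
  also have "\<dots> \<in> sets (seqZ \<Otimes>\<^sub>M bernoulliN)"
    using measurable_sets[OF measurable_unshiftZ assms]
    by (intro sets.finite_UN pair_measureI) simp_all
  finally show ?thesis .
qed

lemma vimage_periodic_lift:
  assumes inv: "(shiftZ ^^ 2 ^ Suc k) -` A = A"
  shows "map_prod shiftZ odometer -` periodic_lift k A = periodic_lift k A"
proof (intro set_eqI, clarify)
  fix x a
  define n where "n = binval (Suc k) a"
  have "n < 2 ^ Suc k"
    using binval_less[of "Suc k" a] by (simp add: n_def)
  then consider "n + 1 < 2 ^ Suc k" | "n + 1 = 2 ^ Suc k"
    by linarith
  then show "(x, a) \<in> map_prod shiftZ odometer -` periodic_lift k A \<longleftrightarrow> (x, a) \<in> periodic_lift k A"
  proof cases
    case 1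
    then show ?thesis
      using unshiftZ_add_shiftZ_funpow[of n 1 x]
      by (simp add: periodic_lift_def binval_odometer n_def[symmetric])
  next
    case 2
    then have "(shiftZ ^^ 2 ^ Suc k) (unshiftZ n x) = shiftZ x"
      using shiftZ_funpow_add_unshiftZ[of 1 n x] by simp
    then have "unshiftZ n x \<in> A \<longleftrightarrow> shiftZ x \<in> A"
      using inv by (metis vimage_eq)
    moreover have "binval (Suc k) (odometer a) = 0"
      using 2 by (simp add: binval_odometer n_def[symmetric])
    ultimately show ?thesis
      by (simp add: periodic_lift_def n_def[symmetric])
  qed
qed

lemma unshiftZ_pow2_mem_iff:
  assumes inv: "(shiftZ ^^ 2 ^ Suc k) -` A = A"
  shows "unshiftZ (2 ^ k) y \<in> A \<longleftrightarrow> (shiftZ ^^ 2 ^ k) y \<in> A"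
proof -
  have "(2::nat) ^ Suc k = 2 ^ k + 2 ^ k"
    by simp
  then have "(shiftZ ^^ 2 ^ Suc k) (unshiftZ (2 ^ k) y) = (shiftZ ^^ 2 ^ k) y"
    by (simp only: shiftZ_funpow_add_unshiftZ)
  then show ?thesis
    using inv by (metis vimage_eq)
qed

lemma section_periodic_lift:
  assumes inv: "(shiftZ ^^ 2 ^ Suc k) -` A = A" and "i < 2 ^ k"
  shows "Pair ((shiftZ ^^ i) y) -` periodic_lift k A \<inter> cylA i k
    = (if y \<in> A then cylA i (Suc k) else {}) \<union>
      (if (shiftZ ^^ 2 ^ k) y \<in> A then cylA (i + 2 ^ k) (Suc k) else {})"
proof (intro set_eqI)
  fix a
  have mem: "a \<in> Pair ((shiftZ ^^ i) y) -` periodic_lift k A \<inter> cylA i k \<longleftrightarrow>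
      a \<in> cylA i k \<and> unshiftZ (binval (Suc k) a) ((shiftZ ^^ i) y) \<in> A"
    by (auto simp: periodic_lift_def cylA_binval)
  show "a \<in> Pair ((shiftZ ^^ i) y) -` periodic_lift k A \<inter> cylA i k \<longleftrightarrow>
      a \<in> (if y \<in> A then cylA i (Suc k) else {}) \<union>
        (if (shiftZ ^^ 2 ^ k) y \<in> A then cylA (i + 2 ^ k) (Suc k) else {})"
  proof (cases "a k")
    case True
    then have "a \<in> cylA i k \<Longrightarrow> binval (Suc k) a = 2 ^ k + i"
      by (simp add: binval_Suc cylA_binval)
    then show ?thesis
      using True unshiftZ_add_shiftZ_funpow[of "2 ^ k" i y] unshiftZ_pow2_mem_iff[OF inv, of y]
      unfolding mem cylA_Suc_low[OF assms(2)] cylA_Suc_high[OF assms(2)] by auto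
  next
    case False
    then have "a \<in> cylA i k \<Longrightarrow> binval (Suc k) a = 0 + i"
      by (simp add: binval_Suc cylA_binval)
    then show ?thesis
      using False unshiftZ_add_shiftZ_funpow[of 0 i y]
      unfolding mem cylA_Suc_low[OF assms(2)] cylA_Suc_high[OF assms(2)] by auto
  qed
qed

lemma emeasure_section_periodic_lift:
  assumes inv: "(shiftZ ^^ 2 ^ Suc k) -` A = A" and "i < 2 ^ k"
  shows "emeasure bernoulliN (Pair ((shiftZ ^^ i) y) -` periodic_lift k A \<inter> cylA i k)
    = ennreal ((1/2) ^ Suc k) * (indicator A y + indicator ((shiftZ ^^ 2 ^ k) -` A) y)"
proof -
  have "cylA i (Suc k) \<inter> cylA (i + 2 ^ k) (Suc k) = {}"
    by (auto simp: cylA_binval)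
  then have "emeasure bernoulliN (Pair ((shiftZ ^^ i) y) -` periodic_lift k A \<inter> cylA i k)
      = emeasure bernoulliN (if y \<in> A then cylA i (Suc k) else {}) +
        emeasure bernoulliN (if (shiftZ ^^ 2 ^ k) y \<in> A then cylA (i + 2 ^ k) (Suc k) else {})"
    unfolding section_periodic_lift[OF assms] by (intro plus_emeasure[symmetric]) auto
  moreover have "i < 2 ^ Suc k" "i + 2 ^ k < 2 ^ Suc k"
    using assms(2) by simp_all
  ultimately show ?thesis
    by (simp add: emeasure_cylA distrib_left)
qed

context periodic_base
begin

lemma emeasure_periodic_lift:
  assumes A: "A \<in> sets seqZ" and inv: "(shiftZ ^^ 2 ^ Suc k) -` A = A"
  shows "emeasure (periodic_type k \<eta>) (periodic_lift k A) = emeasure \<eta> A"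
proof -
  define B where "B = (shiftZ ^^ 2 ^ k) -` A"
  define c :: ennreal where "c = ennreal ((1/2) ^ Suc k)"
  have B: "B \<in> sets \<eta>"
    using measurable_sets[OF measurable_shiftZ_funpow A] by (simp add: B_def sets_eq)
  have "emeasure \<eta> B = emeasure (distr \<eta> seqZ (shiftZ ^^ 2 ^ k)) A"
    using A by (simp add: emeasure_distr measurable_shiftZ_funpow_seqZ space_eta B_def)
  then have B_A: "emeasure \<eta> B = emeasure \<eta> A"
    by (simp add: distr_shiftZ)
  have "emeasure (periodic_type k \<eta>) (periodic_lift k A)
      = (\<Sum>i<(2::nat) ^ k. \<integral>\<^sup>+ y. c * indicator A y + c * indicator B y \<partial>\<eta>)"
    using sets_periodic_lift[OF A] emeasure_section_periodic_lift[OF inv]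
    by (simp add: emeasure_periodic_type[OF sets_eq] B_def c_def distrib_left)
  also have "\<dots> = (\<Sum>i<(2::nat) ^ k. (c + c) * emeasure \<eta> A)"
    using A B B_A sets_eq by (simp add: nn_integral_add nn_integral_cmult_indicator distrib_right)
  also have "\<dots> = emeasure \<eta> A"
  proof -
    have "of_nat (2 ^ k) * (c + c) = ennreal (2 ^ k * (2 * (1/2) ^ Suc k))"
      by (simp add: c_def ennreal_mult ennreal_of_nat_eq_real_of_nat flip: ennreal_plus)
    also have "\<dots> = 1"
      by (simp add: power_mult_distrib[symmetric])
    finally show ?thesis
      by (simp add: mult.assoc[symmetric])
  qed
  finally show ?thesis .
qed

lemma ergodic_of_periodic_type:
  assumes erg: "ergodic (periodic_type k \<eta>) (map_prod shiftZ odometer)"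
  shows "ergodic \<eta> (shiftZ ^^ 2 ^ (k + 1))"
  unfolding ergodic_def
proof (intro conjI ballI impI measurable_shiftZ_funpow_eta)
  show "distr \<eta> \<eta> (shiftZ ^^ 2 ^ (k + 1)) = \<eta>"
    using distr_funpow[OF measurable_shiftZ_funpow_eta distr_shiftZ_eta, of 2]
    by (simp add: funpow_mult power_add mult.commute)
  fix A assume "A \<in> sets \<eta>" "(shiftZ ^^ 2 ^ (k + 1)) -` A \<inter> space \<eta> = A"
  then have A: "A \<in> sets seqZ" and inv: "(shiftZ ^^ 2 ^ Suc k) -` A = A"
    by (simp_all add: sets_eq space_eta)
  have "periodic_lift k A \<in> sets (periodic_type k \<eta>)"
    using sets_periodic_lift[OF A] by simp
  moreover have "map_prod shiftZ odometer -` periodic_lift k A \<inter> space (periodic_type k \<eta>) = periodic_lift k A"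
    using vimage_periodic_lift[OF inv] by simp
  ultimately have "emeasure (periodic_type k \<eta>) (periodic_lift k A) \<in> {0, 1}"
    using erg unfolding ergodic_def by blast
  then show "emeasure \<eta> A = 0 \<or> emeasure \<eta> A = 1"
    using emeasure_periodic_lift[OF A inv] by simp
qed

end

theorem lemma5:
  fixes k :: nat and \<eta> :: "(int \<Rightarrow> bool) measure"
  assumes "prob_space \<eta>"
    and "sets \<eta> = sets seqZ"
    and "distr \<eta> seqZ (shiftZ ^^ (2 ^ k)) = \<eta>"
  shows "ergodic (periodic_type k \<eta>) (map_prod shiftZ odometer)
         \<longleftrightarrow> ergodic \<eta> (shiftZ ^^ (2 ^ (k + 1)))"
proof -
  interpret periodic_base \<eta> k
    using assms by (simp add: periodic_base_def periodic_base_axioms_def)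
  show ?thesis
    using ergodic_of_periodic_type ergodic_periodic_type by blast
qed

end
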